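(* Let $G$ be an amenable group, let $E$ be a Følner approximation of $G$, and let $C\subseteq{}^*G$ be internal with $\mathrm{st}(|C\cap E|/|E|)=\gamma>0$. Let $0\le\varepsilon<\gamma^2$ and $k=\left\lfloor\frac{\gamma-\varepsilon}{\gamma^2-\varepsilon}\right\rfloor$. Define $$\mathcal{D}^E_\varepsilon(C)=\left\{g\in G\;\Big|\;\mathrm{st}\left(\frac{|C\cap gC\cap E|}{|E|}\right)>\varepsilon\right\}.$$ Then for every $P\subseteq G$ and every $g_0\in P$ there exists $F\subseteq P$ with $g_0\in F$, $|F|\le k$ and $P\subseteq F\cdot\mathcal{D}^E_\varepsilon(C)$.
   Context: $G$ is amenable: for every finite $H\subseteq G$ and $\varepsilon>0$ there is a nonempty finite $K$ with $|hK\triangle K|/|K|<\varepsilon$ for all $h\in H$. Nonstandard conventions: ${}^*X$ is the hyperextension of $X$, $G$ is identified with its image in ${}^*G$, $\xi\approx\zeta$ means $\xi-\zeta$ is infinitesimal, $\mathrm{st}$ is the standard part. A Følner approximation of $G$ is a nonempty hyperfinite set $E\subseteq{}^*G$ such that $|gE\triangle E|/|E|\approx0$ for every $g\in G$. *)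

theory Defs
  imports "HOL-Analysis.Analysis" "HOL-Algebra.Coset"
begin

definition amenable :: "('a, 'b) monoid_scheme \<Rightarrow> bool" where
  "amenable G \<longleftrightarrow>
     (\<forall>H \<subseteq> carrier G. finite H \<longrightarrow> (\<forall>\<epsilon>>0::real.
        (\<exists>K. finite K \<and> K \<noteq> {} \<and> K \<subseteq> carrier G \<and>
             (\<forall>h\<in>H. real (card (((h <#\<^bsub>G\<^esub> K) - K) \<union> (K - (h <#\<^bsub>G\<^esub> K))))
                       / real (card K) < \<epsilon>))))"

text \<open>The nonstandard extension is modelled as the ultrapower over a free
  ultrafilter U on an index type 'i: elements of *G are (classes of) maps 'i => G,
  internal subsets of *G are (classes of) maps 'i => G set, hyperfinite sets have
  eventually finite components, internal cardinalities are taken componentwise.\<close>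
definition free_ultrafilter :: "'i filter \<Rightarrow> bool" where
  "free_ultrafilter U \<longleftrightarrow> U \<noteq> bot \<and> (\<forall>P. eventually P U \<or> eventually (\<lambda>x. \<not> P x) U)
     \<and> (\<forall>x. eventually (\<lambda>i. i \<noteq> x) U)"

definition st :: "'i filter \<Rightarrow> ('i \<Rightarrow> real) \<Rightarrow> real" where
  "st U x = Lim U x"

definition internal_subset :: "('a, 'b) monoid_scheme \<Rightarrow> 'i filter \<Rightarrow> ('i \<Rightarrow> 'a set) \<Rightarrow> bool" where
  "internal_subset G U C \<longleftrightarrow> eventually (\<lambda>n. C n \<subseteq> carrier G) U"

definition folner_approx :: "('a, 'b) monoid_scheme \<Rightarrow> 'i filter \<Rightarrow> ('i \<Rightarrow> 'a set) \<Rightarrow> bool" where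
  "folner_approx G U E \<longleftrightarrow>
     eventually (\<lambda>n. finite (E n) \<and> E n \<noteq> {} \<and> E n \<subseteq> carrier G) U \<and>
     (\<forall>g\<in>carrier G.
        st U (\<lambda>n. real (card (((g <#\<^bsub>G\<^esub> E n) - E n) \<union> (E n - (g <#\<^bsub>G\<^esub> E n))))
                   / real (card (E n))) = 0)"

definition Dset :: "('a, 'b) monoid_scheme \<Rightarrow> 'i filter \<Rightarrow> ('i \<Rightarrow> 'a set) \<Rightarrow> real
                     \<Rightarrow> ('i \<Rightarrow> 'a set) \<Rightarrow> 'a set" where
  "Dset G U E \<epsilon> C = {g \<in> carrier G.
      st U (\<lambda>n. real (card (C n \<inter> (g <#\<^bsub>G\<^esub> C n) \<inter> E n)) / real (card (E n))) > \<epsilon>}"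

end

theory Submission imports Defs begin

(* For f, f' in G let corr f f' = st(|fC \<inter> f'C \<inter> E| / |E|).  Because E is
   almost invariant, corr f f' equals the density of C \<inter> f\<inverse>f'C in E, so
   corr f f' > \<epsilon> means f\<inverse>f' \<in> D\<epsilon>(C), and corr f f = \<gamma>.
   (1) Standard parts along an ultrafilter are honest limits of bounded
       sequences, so inequalities between finite sums pass to the limit.
   (2) Counting with Cauchy-Schwarz gives (\<Sum>f |fC\<inter>E|)^2 \<le> |E| \<Sum>f,f' |fC\<inter>f'C\<inter>E|;
       hence an \<epsilon>-separated F (pairwise corr \<le> \<epsilon>) of size m satisfies
       (m\<gamma>)^2 \<le> m\<gamma> + m(m-1)\<epsilon>, i.e. m \<le> (\<gamma>-\<epsilon>)/(\<gamma>^2-\<epsilon>).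
   (3) A maximal separated subset F of P containing g0 (exists by the bound)
       is a net: every p in P correlates with some f in F, so
       p = f(f\<inverse>p) \<in> F\<cdot>D\<epsilon>(C). *)

section \<open>Standard parts along an ultrafilter\<close>

lemma ultrafilter_tendsto_st:
  fixes f :: "'i \<Rightarrow> real"
  assumes proper: "U \<noteq> bot" and ultra: "\<And>P. eventually P U \<or> eventually (\<lambda>x. \<not> P x) U"
    and bounded: "eventually (\<lambda>n. f n \<in> {a..b}) U"
  shows "(f \<longlongrightarrow> st U f) U"
proof -
  have "filtermap f U \<noteq> bot" using proper by (simp add: filtermap_bot_iff)
  moreover have "eventually (\<lambda>x. x \<in> {a..b}) (filtermap f U)"
    using bounded by (simp add: eventually_filtermap)
  ultimately obtain x where cluster: "inf (nhds x) (filtermap f U) \<noteq> bot"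
    using compact_filter[THEN iffD1, OF compact_Icc] by blast
  have lim: "(f \<longlongrightarrow> x) U"
  proof (rule topological_tendstoI)
    fix S :: "real set" assume S: "open S" "x \<in> S"
    show "eventually (\<lambda>n. f n \<in> S) U"
    proof (rule ccontr)
      assume "\<not> eventually (\<lambda>n. f n \<in> S) U"
      then have "eventually (\<lambda>y. y \<notin> S) (filtermap f U)"
        using ultra by (auto simp: eventually_filtermap)
      moreover have "eventually (\<lambda>y. y \<in> S) (nhds x)" using S by (rule eventually_nhds_in_open)
      ultimately have "eventually (\<lambda>_. False) (inf (nhds x) (filtermap f U))"
        unfolding eventually_inf by blast
      then show False using cluster by (simp add: eventually_False)
    qed
  qed
  then show ?thesis unfolding st_def using proper by (simp add: tendsto_Lim)
qed

lemma free_ultrafilter_tendsto_st: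
  fixes f :: "'i \<Rightarrow> real"
  assumes "free_ultrafilter U" and "eventually (\<lambda>n. f n \<in> {a..b}) U"
  shows "(f \<longlongrightarrow> st U f) U"
  using assms unfolding free_ultrafilter_def by (blast intro: ultrafilter_tendsto_st)

lemma st_cong: "eventually (\<lambda>n. f n = g n) U \<Longrightarrow> st U f = st U g"
  unfolding st_def by (rule Lim_cong) auto

lemma density_in_unit_interval: "A \<subseteq> Y \<Longrightarrow> real (card A) / real (card Y) \<in> {0..1}"
proof (cases "finite Y")
  case True
  assume "A \<subseteq> Y"
  then have "card A \<le> card Y" using True by (simp add: card_mono)
  then show ?thesis by (cases "card Y = 0") (auto simp: divide_le_eq_1)
qed simp

lemma tendsto_st_density:
  assumes "free_ultrafilter U" and "\<And>n. A n \<subseteq> Y n"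
  shows "((\<lambda>n. real (card (A n)) / real (card (Y n))) \<longlongrightarrow>
           st U (\<lambda>n. real (card (A n)) / real (card (Y n)))) U"
  using assms(2) by (intro free_ultrafilter_tendsto_st[OF assms(1), of _ 0 1] always_eventually
      allI density_in_unit_interval)

lemma st_density_in_unit_interval:
  assumes "free_ultrafilter U" and "\<And>n. A n \<subseteq> Y n"
  shows "st U (\<lambda>n. real (card (A n)) / real (card (Y n))) \<in> {0..1}"
proof -
  have proper: "U \<noteq> bot" using assms(1) unfolding free_ultrafilter_def by blast
  have bounds: "eventually (\<lambda>n. 0 \<le> real (card (A n)) / real (card (Y n))) U"
    "eventually (\<lambda>n. real (card (A n)) / real (card (Y n)) \<le> 1) U"
    using density_in_unit_interval[OF assms(2)] by auto
  show ?thesis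
    using tendsto_lowerbound[OF tendsto_st_density[OF assms] bounds(1) proper]
      tendsto_upperbound[OF tendsto_st_density[OF assms] bounds(2) proper] by simp
qed

lemma l_coset_image: "g <#\<^bsub>G\<^esub> X = (\<lambda>x. g \<otimes>\<^bsub>G\<^esub> x) ` X"
  unfolding l_coset_def by auto

lemma (in group) inj_on_left_mult: "g \<in> carrier G \<Longrightarrow> inj_on (\<lambda>x. g \<otimes> x) (carrier G)"
  unfolding inj_on_def by (metis Units_eq Units_l_cancel)

lemma (in group) card_l_coset: "X \<subseteq> carrier G \<Longrightarrow> g \<in> carrier G \<Longrightarrow> card (g <# X) = card X"
  unfolding l_coset_image by (metis card_image inj_on_left_mult inj_on_subset)

lemma (in group) l_coset_Int:
  "X \<subseteq> carrier G \<Longrightarrow> Y \<subseteq> carrier G \<Longrightarrow> g \<in> carrier G \<Longrightarrow> g <# (X \<inter> Y) = (g <# X) \<inter> (g <# Y)"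
  unfolding l_coset_image by (rule inj_on_image_Int[OF inj_on_left_mult])

lemma (in group) symdiff_ratio_bounded:
  assumes "finite E" "E \<subseteq> carrier G" "g \<in> carrier G"
  shows "real (card (((g <# E) - E) \<union> (E - (g <# E)))) / real (card E) \<in> {0..2}"
proof -
  have "card (((g <# E) - E) \<union> (E - (g <# E))) \<le> card (g <# E) + card E"
    by (rule order_trans[OF card_Un_le]) (intro add_mono card_mono, auto simp: assms l_coset_image)
  also have "\<dots> = 2 * card E" using assms by (simp add: card_l_coset)
  finally show ?thesis by (cases "card E = 0") (auto simp: divide_le_eq)
qed

lemma card_Int_diff_le_symdiff:
  assumes "finite X" "finite Y"
  shows "\<bar>real (card (A \<inter> X)) - real (card (A \<inter> Y))\<bar> \<le> real (card ((X - Y) \<union> (Y - X)))"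
proof -
  have XY: "card (A \<inter> X) \<le> card (A \<inter> Y) + card (X - Y)"
    by (rule order_trans[OF _ card_Un_le], rule card_mono) (use assms in auto)
  have YX: "card (A \<inter> Y) \<le> card (A \<inter> X) + card (Y - X)"
    by (rule order_trans[OF _ card_Un_le], rule card_mono) (use assms in auto)
  have "card (X - Y) \<le> card ((X - Y) \<union> (Y - X))" "card (Y - X) \<le> card ((X - Y) \<union> (Y - X))"
    by (intro card_mono; use assms in auto)+
  then show ?thesis using XY YX by linarith
qed

section \<open>A Cauchy-Schwarz counting inequality\<close>

text \<open>For finitely many subsets A f of a finite set E,
  (\<Sum>f |A f|)^2 \<le> |E| \<Sum>f,f' |A f \<inter> A f'|: apply Cauchy-Schwarz to the multiplicity
  function x \<mapsto> #{f. x \<in> A f} on E.\<close>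
lemma sum_card_squared_le:
  fixes A :: "'f \<Rightarrow> 'a set"
  assumes F: "finite F" and E: "finite E" and sub: "\<And>f. f \<in> F \<Longrightarrow> A f \<subseteq> E"
  shows "(\<Sum>f\<in>F. real (card (A f)))\<^sup>2 \<le> real (card E) * (\<Sum>f\<in>F. \<Sum>f'\<in>F. real (card (A f \<inter> A f')))"
proof -
  define mult where "mult x = (\<Sum>f\<in>F. (of_bool (x \<in> A f) :: real))" for x
  have card_A: "real (card (A f)) = (\<Sum>x\<in>E. of_bool (x \<in> A f))" if "f \<in> F" for f
  proof -
    have "E \<inter> {x. x \<in> A f} = A f" using sub[OF that] by auto
    then show ?thesis using E by simp
  qed
  have card_AA: "real (card (A f \<inter> A f')) = (\<Sum>x\<in>E. of_bool (x \<in> A f) * of_bool (x \<in> A f'))"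
    if "f \<in> F" for f f'
  proof -
    have "E \<inter> {x. x \<in> A f \<and> x \<in> A f'} = A f \<inter> A f'" using sub[OF that] by auto
    moreover have "(\<Sum>x\<in>E. (of_bool (x \<in> A f) * of_bool (x \<in> A f') :: real))
                 = (\<Sum>x\<in>E. of_bool (x \<in> A f \<and> x \<in> A f'))"
      by (intro sum.cong) auto
    ultimately show ?thesis using E by simp
  qed
  have "(\<Sum>f\<in>F. real (card (A f))) = (\<Sum>x\<in>E. mult x)"
    unfolding mult_def using card_A by (simp add: sum.swap[of _ E F])
  moreover have "(\<Sum>f\<in>F. \<Sum>f'\<in>F. real (card (A f \<inter> A f'))) = (\<Sum>x\<in>E. (mult x)\<^sup>2)"
  proof -
    have "(\<Sum>f\<in>F. \<Sum>f'\<in>F. real (card (A f \<inter> A f')))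
        = (\<Sum>f\<in>F. \<Sum>f'\<in>F. \<Sum>x\<in>E. of_bool (x \<in> A f) * of_bool (x \<in> A f'))"
      by (intro sum.cong refl) (simp add: card_AA)
    also have "\<dots> = (\<Sum>x\<in>E. \<Sum>f\<in>F. \<Sum>f'\<in>F. of_bool (x \<in> A f) * of_bool (x \<in> A f'))"
      by (subst sum.swap, rule sum.cong, simp, subst sum.swap, simp)
    also have "\<dots> = (\<Sum>x\<in>E. (mult x)\<^sup>2)"
      unfolding mult_def power2_eq_square by (simp add: sum_product)
    finally show ?thesis .
  qed
  ultimately show ?thesis using sum_squared_le_sum_of_squares[of mult E] by (simp add: mult.commute)
qed

lemma sum_density_squared_le:
  fixes A :: "'f \<Rightarrow> 'a set"
  assumes F: "finite F" and E: "finite E"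
  shows "(\<Sum>f\<in>F. real (card (A f \<inter> E)) / real (card E))\<^sup>2
         \<le> (\<Sum>f\<in>F. \<Sum>f'\<in>F. real (card (A f \<inter> A f' \<inter> E)) / real (card E))"
proof (cases "card E = 0")
  case False
  define c where "c = real (card E)"
  have c: "c > 0" using False by (simp add: c_def)
  have "A f \<inter> E \<inter> (A f' \<inter> E) = A f \<inter> A f' \<inter> E" for f f' by blast
  then have CS: "(\<Sum>f\<in>F. real (card (A f \<inter> E)))\<^sup>2 \<le> c * (\<Sum>f\<in>F. \<Sum>f'\<in>F. real (card (A f \<inter> A f' \<inter> E)))"
    using sum_card_squared_le[OF F E, of "\<lambda>f. A f \<inter> E"] by (simp add: c_def)
  have "(\<Sum>f\<in>F. real (card (A f \<inter> E)) / c)\<^sup>2 = (\<Sum>f\<in>F. real (card (A f \<inter> E)))\<^sup>2 / c / c"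
    by (simp add: power2_eq_square flip: sum_divide_distrib)
  also have "\<dots> \<le> c * (\<Sum>f\<in>F. \<Sum>f'\<in>F. real (card (A f \<inter> A f' \<inter> E))) / c / c"
    using CS c by (intro divide_right_mono) auto
  also have "\<dots> = (\<Sum>f\<in>F. \<Sum>f'\<in>F. real (card (A f \<inter> A f' \<inter> E)) / c)"
    using c by (simp add: sum_divide_distrib)
  finally show ?thesis by (simp add: c_def)
qed simp

definition corr :: "('a, 'b) monoid_scheme \<Rightarrow> 'i filter \<Rightarrow> ('i \<Rightarrow> 'a set) \<Rightarrow> ('i \<Rightarrow> 'a set)
                      \<Rightarrow> 'a \<Rightarrow> 'a \<Rightarrow> real" where
  "corr G U E C f f' =
     st U (\<lambda>n. real (card ((f <#\<^bsub>G\<^esub> C n) \<inter> (f' <#\<^bsub>G\<^esub> C n) \<inter> E n)) / real (card (E n)))"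

lemma corr_sym: "corr G U E C f f' = corr G U E C f' f"
  unfolding corr_def by (simp add: Int_commute)

locale folner_setting = group G for G :: "('a, 'b) monoid_scheme" (structure) +
  fixes U :: "'i filter" and E C :: "'i \<Rightarrow> 'a set"
  assumes ultra: "free_ultrafilter U"
    and folner: "folner_approx G U E"
    and internal: "internal_subset G U C"
begin

lemma proper: "U \<noteq> bot"
  using ultra unfolding free_ultrafilter_def by blast

lemma eventually_E: "eventually (\<lambda>n. finite (E n) \<and> E n \<noteq> {} \<and> E n \<subseteq> carrier G) U"
  using folner unfolding folner_approx_def by blast

lemma eventually_C: "eventually (\<lambda>n. C n \<subseteq> carrier G) U"
  using internal unfolding internal_subset_def .

text \<open>Densities relative to E are invariant under translating E by a standard
  element: this is exactly where the Foelner property is used.\<close>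
lemma st_density_translate:
  assumes g: "g \<in> carrier G"
  shows "st U (\<lambda>n. real (card (A n \<inter> (g <# E n))) / real (card (E n)))
       = st U (\<lambda>n. real (card (A n \<inter> E n)) / real (card (E n)))"
    (is "st U ?x = st U ?y")
proof -
  define d where "d n = real (card (((g <# E n) - E n) \<union> (E n - (g <# E n)))) / real (card (E n))" for n
  have "st U d = 0" using folner g unfolding folner_approx_def d_def by blast
  moreover have "eventually (\<lambda>n. d n \<in> {0..2}) U"
    using eventually_E by eventually_elim (use g symdiff_ratio_bounded in \<open>auto simp: d_def\<close>)
  ultimately have d_lim: "(d \<longlongrightarrow> 0) U" using free_ultrafilter_tendsto_st[OF ultra] by fastforce
  have "eventually (\<lambda>n. norm (?x n - ?y n) \<le> d n) U"
    using eventually_E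
  proof eventually_elim
    case (elim n)
    then have "finite (g <# E n)" by (simp add: l_coset_image)
    then show ?case
      using card_Int_diff_le_symdiff[of "g <# E n" "E n" "A n"] elim
      by (simp add: d_def abs_divide divide_right_mono flip: diff_divide_distrib)
  qed
  then have diff_0: "((\<lambda>n. ?x n - ?y n) \<longlongrightarrow> 0) U" using d_lim by (rule Lim_null_comparison)
  have "eventually (\<lambda>n. ?x n \<in> {0..1}) U"
    using eventually_E
  proof eventually_elim
    case (elim n)
    then have "A n \<inter> (g <# E n) \<subseteq> g <# E n" "card (g <# E n) = card (E n)"
      using g by (auto simp: card_l_coset)
    then show ?case
      using density_in_unit_interval[of "A n \<inter> (g <# E n)" "g <# E n"] by simp
  qed
  then have "(?x \<longlongrightarrow> st U ?x) U" by (rule free_ultrafilter_tendsto_st[OF ultra])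
  moreover have "(?y \<longlongrightarrow> st U ?y) U" by (rule tendsto_st_density[OF ultra]) auto
  ultimately have "((\<lambda>n. ?x n - ?y n) \<longlongrightarrow> st U ?x - st U ?y) U" by (rule tendsto_diff)
  then have "st U ?x - st U ?y = 0" using tendsto_unique[OF proper _ diff_0] by blast
  then show ?thesis by simp
qed

lemma tendsto_corr:
  "((\<lambda>n. real (card ((f <# C n) \<inter> (f' <# C n) \<inter> E n)) / real (card (E n)))
     \<longlongrightarrow> corr G U E C f f') U"
  unfolding corr_def by (rule tendsto_st_density[OF ultra]) auto

text \<open>Translating everything by f\<inverse>: the correlation of fC and f'C is the density
  of C \<inter> f\<inverse>f'C in E, the quantity defining the set D\<epsilon>(C).\<close>
lemma corr_eq_density:
  assumes f: "f \<in> carrier G" and f': "f' \<in> carrier G"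
  shows "corr G U E C f f' = st U (\<lambda>n. real (card (C n \<inter> ((inv f \<otimes> f') <# C n) \<inter> E n)) / real (card (E n)))"
proof -
  have h: "inv f \<otimes> f' \<in> carrier G" using f f' by simp
  have "eventually (\<lambda>n. card ((f <# C n) \<inter> (f' <# C n) \<inter> (f <# E n))
                      = card (C n \<inter> ((inv f \<otimes> f') <# C n) \<inter> E n)) U"
    using eventually_E eventually_C
  proof eventually_elim
    case (elim n)
    have "(inv f \<otimes> f') <# C n \<subseteq> carrier G" using elim h by (intro l_coset_subset_G) auto
    then have "f <# (C n \<inter> ((inv f \<otimes> f') <# C n) \<inter> E n) = (f <# C n) \<inter> (f' <# C n) \<inter> (f <# E n)"
      using elim h f f' by (simp add: l_coset_Int le_infI1 lcos_m_assoc m_assoc[symmetric] lcos_mult_one)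
    then show ?case using elim f by (metis card_l_coset le_infI2)
  qed
  then have "st U (\<lambda>n. real (card (C n \<inter> ((inv f \<otimes> f') <# C n) \<inter> E n)) / real (card (E n)))
      = st U (\<lambda>n. real (card ((f <# C n) \<inter> (f' <# C n) \<inter> (f <# E n))) / real (card (E n)))"
    by (intro st_cong) (auto elim: eventually_mono)
  also have "\<dots> = corr G U E C f f'"
    unfolding corr_def by (rule st_density_translate[OF f])
  finally show ?thesis by simp
qed

lemma corr_diag:
  assumes f: "f \<in> carrier G"
  shows "corr G U E C f f = st U (\<lambda>n. real (card (C n \<inter> E n)) / real (card (E n)))"
proof -
  have "eventually (\<lambda>n. C n \<inter> ((inv f \<otimes> f) <# C n) \<inter> E n = C n \<inter> E n) U"
    using eventually_C by eventually_elim (use f in \<open>simp add: lcos_mult_one\<close>)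
  then show ?thesis
    unfolding corr_eq_density[OF f f] by (intro st_cong) (auto elim: eventually_mono)
qed

text \<open>Densities are at most 1, hence \<gamma>^2 \<le> \<gamma>; so \<epsilon> < \<gamma>^2 forces every translate of C to
  be \<epsilon>-correlated with itself.\<close>
lemma density_sq_le:
  assumes gamma: "st U (\<lambda>n. real (card (C n \<inter> E n)) / real (card (E n))) = \<gamma>"
  shows "\<gamma>\<^sup>2 \<le> \<gamma>"
proof -
  have "\<gamma> \<in> {0..1}"
    using gamma st_density_in_unit_interval[OF ultra, of "\<lambda>n. C n \<inter> E n" E] by auto
  then show ?thesis by (simp add: power2_eq_square mult_left_le)
qed

lemma corr_diag_gt:
  assumes gamma: "st U (\<lambda>n. real (card (C n \<inter> E n)) / real (card (E n))) = \<gamma>"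
    and eps: "\<epsilon> < \<gamma>\<^sup>2" and f: "f \<in> carrier G"
  shows "corr G U E C f f > \<epsilon>"
  using corr_diag[OF f] density_sq_le[OF gamma] gamma eps by simp

lemma sum_corr_squared_le:
  assumes "finite F"
  shows "(\<Sum>f\<in>F. corr G U E C f f)\<^sup>2 \<le> (\<Sum>f\<in>F. \<Sum>f'\<in>F. corr G U E C f f')"
proof (rule tendsto_le[OF proper])
  show "((\<lambda>n. \<Sum>f\<in>F. \<Sum>f'\<in>F. real (card ((f <# C n) \<inter> (f' <# C n) \<inter> E n)) / real (card (E n)))
          \<longlongrightarrow> (\<Sum>f\<in>F. \<Sum>f'\<in>F. corr G U E C f f')) U"
    by (intro tendsto_sum tendsto_corr)
  show "((\<lambda>n. (\<Sum>f\<in>F. real (card ((f <# C n) \<inter> (f <# C n) \<inter> E n)) / real (card (E n)))\<^sup>2)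
          \<longlongrightarrow> (\<Sum>f\<in>F. corr G U E C f f)\<^sup>2) U"
    by (intro tendsto_power tendsto_sum tendsto_corr)
  show "eventually (\<lambda>n. (\<Sum>f\<in>F. real (card ((f <# C n) \<inter> (f <# C n) \<inter> E n)) / real (card (E n)))\<^sup>2
          \<le> (\<Sum>f\<in>F. \<Sum>f'\<in>F. real (card ((f <# C n) \<inter> (f' <# C n) \<inter> E n)) / real (card (E n)))) U"
    using eventually_E
  proof eventually_elim
    case (elim n)
    then show ?case
      using sum_density_squared_le[OF assms, of "E n" "\<lambda>f. f <# C n"] by simp
  qed
qed

lemma separated_card_bound:
  assumes gamma: "st U (\<lambda>n. real (card (C n \<inter> E n)) / real (card (E n))) = \<gamma>"
    and eps: "\<epsilon> < \<gamma>\<^sup>2"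
    and F: "finite F" "F \<subseteq> carrier G"
    and separated: "pairwise (\<lambda>f f'. corr G U E C f f' \<le> \<epsilon>) F"
  shows "real (card F) \<le> (\<gamma> - \<epsilon>) / (\<gamma>\<^sup>2 - \<epsilon>)"
proof -
  define m where "m = real (card F)"
  have diag: "corr G U E C f f = \<gamma>" if "f \<in> F" for f
    using corr_diag that F gamma by auto
  have row: "(\<Sum>f'\<in>F. corr G U E C f f') \<le> \<gamma> + (m - 1) * \<epsilon>" if f: "f \<in> F" for f
  proof -
    have "(\<Sum>f'\<in>F. corr G U E C f f') = corr G U E C f f + (\<Sum>f'\<in>F - {f}. corr G U E C f f')"
      using F(1) f by (rule sum.remove)
    also have "(\<Sum>f'\<in>F - {f}. corr G U E C f f') \<le> real (card (F - {f})) * \<epsilon>"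
      by (rule sum_bounded_above) (use separated f in \<open>auto simp: pairwise_def\<close>)
    also have "real (card (F - {f})) = m - 1"
    proof -
      have "card F \<ge> 1" using F(1) f by (metis One_nat_def Suc_leI card_gt_0_iff empty_iff)
      then show ?thesis using F(1) f by (simp add: m_def card_Diff_singleton of_nat_diff)
    qed
    finally show ?thesis using diag[OF f] by simp
  qed
  have "(m * \<gamma>)\<^sup>2 = (\<Sum>f\<in>F. corr G U E C f f)\<^sup>2" using diag by (simp add: m_def)
  also have "\<dots> \<le> (\<Sum>f\<in>F. \<Sum>f'\<in>F. corr G U E C f f')" using F(1) by (rule sum_corr_squared_le)
  also have "\<dots> \<le> (\<Sum>f\<in>F. \<gamma> + (m - 1) * \<epsilon>)" by (rule sum_mono) (rule row)
  also have "\<dots> = m * \<gamma> + m * (m - 1) * \<epsilon>" by (simp add: m_def algebra_simps)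
  finally have "m * (m * (\<gamma>\<^sup>2 - \<epsilon>)) \<le> m * (\<gamma> - \<epsilon>)" by (simp add: power2_eq_square algebra_simps)
  moreover have "\<gamma>\<^sup>2 \<le> \<gamma>" using gamma by (rule density_sq_le)
  ultimately have "m * (\<gamma>\<^sup>2 - \<epsilon>) \<le> \<gamma> - \<epsilon>"
    using eps by (cases "m = 0") (auto simp: m_def)
  then show ?thesis using eps by (simp add: m_def pos_le_divide_eq)
qed

text \<open>Correlation above \<epsilon> places the quotient f\<inverse>p into D\<epsilon>(C), i.e. p \<in> f D\<epsilon>(C); hence
  a set F to which every point of P is \<epsilon>-correlated satisfies P \<subseteq> F D\<epsilon>(C).\<close>
lemma correlated_net_covers:
  assumes P: "P \<subseteq> carrier G" and F: "F \<subseteq> carrier G"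
    and net: "\<forall>p\<in>P. \<exists>f\<in>F. corr G U E C f p > \<epsilon>"
  shows "P \<subseteq> F <#> Dset G U E \<epsilon> C"
proof
  fix p assume p: "p \<in> P"
  then obtain f where f: "f \<in> F" "corr G U E C f p > \<epsilon>" using net by blast
  have fG: "f \<in> carrier G" and pG: "p \<in> carrier G" using f p P F by auto
  have "inv f \<otimes> p \<in> Dset G U E \<epsilon> C"
    using f corr_eq_density[OF fG pG] fG pG unfolding Dset_def by simp
  moreover have "p = f \<otimes> (inv f \<otimes> p)" using fG pG by (simp add: m_assoc[symmetric])
  ultimately show "p \<in> F <#> Dset G U E \<epsilon> C" using f(1) unfolding set_mult_def by blast
qed

end

section \<open>Maximal separated sets are nets\<close>

lemma maximal_separated_subset_is_net:
  assumes refl: "\<And>p. p \<in> P \<Longrightarrow> R p p" and sym: "\<And>p q. R p q \<Longrightarrow> R q p"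
    and bounded: "\<And>F. F \<subseteq> P \<Longrightarrow> finite F \<Longrightarrow> pairwise (\<lambda>f f'. \<not> R f f') F \<Longrightarrow> card F \<le> K"
    and g0: "g0 \<in> P"
  shows "\<exists>F \<subseteq> P. finite F \<and> g0 \<in> F \<and> pairwise (\<lambda>f f'. \<not> R f f') F \<and> (\<forall>p\<in>P. \<exists>f\<in>F. R f p)"
proof -
  define separated where "separated F \<longleftrightarrow> F \<subseteq> P \<and> finite F \<and> g0 \<in> F \<and> pairwise (\<lambda>f f'. \<not> R f f') F"
    for F
  have "separated {g0}" using g0 by (simp add: separated_def)
  moreover have "\<forall>F. separated F \<longrightarrow> card F < Suc K" using bounded by (auto simp: separated_def less_Suc_eq_le)
  ultimately obtain F where F: "separated F" and maximal: "\<And>F'. separated F' \<Longrightarrow> card F' \<le> card F"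
    using Lattices_Big.ex_has_greatest_nat[of separated _ card "Suc K"] by blast
  have "\<exists>f\<in>F. R f p" if p: "p \<in> P" for p
  proof (cases "p \<in> F")
    case True
    then show ?thesis using refl p by blast
  next
    case False
    then have "card (insert p F) > card F" using F by (simp add: separated_def)
    then have "\<not> separated (insert p F)" using maximal by fastforce
    then have "\<not> pairwise (\<lambda>f f'. \<not> R f f') (insert p F)" using F p by (simp add: separated_def)
    then show ?thesis using F sym unfolding separated_def pairwise_insert by blast
  qed
  then show ?thesis using F unfolding separated_def by blast
qed

theorem mainTheorem6:
  fixes G :: "('a, 'b) monoid_scheme" and U :: "'i filter"
    and E C :: "'i \<Rightarrow> 'a set" and \<gamma> \<epsilon> :: real
  assumes "group G" and "amenable G"
    and "free_ultrafilter U"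
    and "folner_approx G U E"
    and "internal_subset G U C"
    and "st U (\<lambda>n. real (card (C n \<inter> E n)) / real (card (E n))) = \<gamma>" and "\<gamma> > 0"
    and "0 \<le> \<epsilon>" and "\<epsilon> < \<gamma>\<^sup>2"
  shows "\<forall>P \<subseteq> carrier G. \<forall>g0 \<in> P. \<exists>F \<subseteq> P. finite F \<and> g0 \<in> F \<and>
           int (card F) \<le> \<lfloor>(\<gamma> - \<epsilon>) / (\<gamma>\<^sup>2 - \<epsilon>)\<rfloor> \<and>
           P \<subseteq> F <#>\<^bsub>G\<^esub> Dset G U E \<epsilon> C"
proof (intro allI impI ballI)
  interpret folner_setting G U E C using assms(1,3-5) by (simp add: folner_setting_def folner_setting_axioms_def)
  fix P g0 assume P: "P \<subseteq> carrier G" and g0: "g0 \<in> P"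
  let ?close = "\<lambda>f f'. corr G U E C f f' > \<epsilon>" and ?k = "(\<gamma> - \<epsilon>) / (\<gamma>\<^sup>2 - \<epsilon>)"
  have refl: "?close p p" if "p \<in> P" for p using corr_diag_gt[OF assms(6,9)] that P by blast
  have sym: "?close q p" if "?close p q" for p q using that corr_sym by metis
  have card_bound: "real (card F) \<le> ?k"
    if "F \<subseteq> P" "finite F" "pairwise (\<lambda>f f'. \<not> ?close f f') F" for F
    using separated_card_bound[OF assms(6,9) that(2)] that P by (simp add: not_less)
  then have bound: "card F \<le> nat \<lfloor>?k\<rfloor>"
    if "F \<subseteq> P" "finite F" "pairwise (\<lambda>f f'. \<not> ?close f f') F" for F
    using that by (blast intro: le_nat_floor)
  obtain F where F: "F \<subseteq> P" "finite F" "g0 \<in> F" "pairwise (\<lambda>f f'. \<not> ?close f f') F"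
    and net: "\<forall>p\<in>P. \<exists>f\<in>F. ?close f p"
    using maximal_separated_subset_is_net[of P ?close, OF refl sym bound g0] by blast
  have "int (card F) \<le> \<lfloor>?k\<rfloor>" using card_bound[OF F(1,2,4)] by (simp add: le_floor_iff)
  moreover have "P \<subseteq> F <#>\<^bsub>G\<^esub> Dset G U E \<epsilon> C"
    using correlated_net_covers[OF P _ net] F(1) P by blast
  ultimately show "\<exists>F\<subseteq>P. finite F \<and> g0 \<in> F \<and> int (card F) \<le> \<lfloor>?k\<rfloor> \<and> P \<subseteq> F <#>\<^bsub>G\<^esub> Dset G U E \<epsilon> C"
    using F by blast
qed

end
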